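(* Let $G$ be a finite connected graph, $T_0$ a spanning tree of $G$, $N=|E(G-T_0)|$, with edges of $E(G-T_0)$ listed $e_1,\dots,e_N$. Then the characteristic polynomial of the mesh matrix is $$\det(X\,Id-Mesh(G,T_0))=X^N+\sum_{j=1}^N(-1)^j\,b_j\,X^{N-j},$$ where $b_j$ is the sum, over all choices of indices $1\le k_1<k_2<\dots<k_j\le N$, of the number of spanning trees of the subgraph $T_0\cup e_{k_1}\cup\dots\cup e_{k_j}$.
   Context: Orient all edges of $G$; let $\vec e_j$ go from $P_j$ to $Q_j$. Set $D(\vec e_j)=0$ if $e_j$ is a loop, and otherwise let $D(\vec e_j)$ be the 1-chain of the unique simple path in $T_0$ from $Q_j$ to $P_j$ (edges oriented along the path). Let $Z[j]=\vec e_j+D(\vec e_j)$. The mesh matrix is $Mesh(G,T_0)=(\langle Z[i],Z[j]\rangle)_{1\le i,j\le N}$, where $\langle\cdot,\cdot\rangle$ is the inner product on 1-chains with the oriented edges orthonormal. *)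

theory Defs
  imports "Jordan_Normal_Form.Char_Poly"
begin

text \<open>Finite (multi)graphs with vertex set V, edge set E; each edge e is oriented from
  src e (P) to tgt e (Q). Loops and parallel edges are allowed.\<close>

definition graph :: "'v set \<Rightarrow> 'e set \<Rightarrow> ('e \<Rightarrow> 'v) \<Rightarrow> ('e \<Rightarrow> 'v) \<Rightarrow> bool" where
  "graph V E src tgt \<longleftrightarrow> finite V \<and> finite E \<and> (\<forall>e\<in>E. src e \<in> V \<and> tgt e \<in> V)"

fun walk :: "('e \<Rightarrow> 'v) \<Rightarrow> ('e \<Rightarrow> 'v) \<Rightarrow> 'e set \<Rightarrow> 'v \<Rightarrow> ('e \<times> bool) list \<Rightarrow> 'v \<Rightarrow> bool" where
  "walk src tgt F u [] v \<longleftrightarrow> u = v"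
| "walk src tgt F u ((e, d) # p) v \<longleftrightarrow> e \<in> F \<and>
     (if d then src e = u \<and> walk src tgt F (tgt e) p v
           else tgt e = u \<and> walk src tgt F (src e) p v)"

fun walk_verts :: "('e \<Rightarrow> 'v) \<Rightarrow> ('e \<Rightarrow> 'v) \<Rightarrow> 'v \<Rightarrow> ('e \<times> bool) list \<Rightarrow> 'v list" where
  "walk_verts src tgt u [] = [u]"
| "walk_verts src tgt u ((e, d) # p) = u # walk_verts src tgt (if d then tgt e else src e) p"

definition simple_path :: "('e \<Rightarrow> 'v) \<Rightarrow> ('e \<Rightarrow> 'v) \<Rightarrow> 'e set \<Rightarrow> 'v \<Rightarrow> ('e \<times> bool) list \<Rightarrow> 'v \<Rightarrow> bool" where
  "simple_path src tgt F u p v \<longleftrightarrow> walk src tgt F u p v \<and> distinct (walk_verts src tgt u p)"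

definition connected_on :: "('e \<Rightarrow> 'v) \<Rightarrow> ('e \<Rightarrow> 'v) \<Rightarrow> 'v set \<Rightarrow> 'e set \<Rightarrow> bool" where
  "connected_on src tgt V F \<longleftrightarrow> (\<forall>u\<in>V. \<forall>v\<in>V. \<exists>p. walk src tgt F u p v)"

text \<open>Acyclic: no edge of F lies on a cycle, i.e. no edge (including loops) whose endpoints
  are joined by a walk avoiding it.\<close>
definition acyclic_edges :: "('e \<Rightarrow> 'v) \<Rightarrow> ('e \<Rightarrow> 'v) \<Rightarrow> 'e set \<Rightarrow> bool" where
  "acyclic_edges src tgt F \<longleftrightarrow> (\<forall>e\<in>F. \<not> (\<exists>p. walk src tgt (F - {e}) (src e) p (tgt e)))"

definition spanning_tree :: "('e \<Rightarrow> 'v) \<Rightarrow> ('e \<Rightarrow> 'v) \<Rightarrow> 'v set \<Rightarrow> 'e set \<Rightarrow> 'e set \<Rightarrow> bool" where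
  "spanning_tree src tgt V F T \<longleftrightarrow> T \<subseteq> F \<and> connected_on src tgt V T \<and> acyclic_edges src tgt T"

definition num_spanning_trees :: "('e \<Rightarrow> 'v) \<Rightarrow> ('e \<Rightarrow> 'v) \<Rightarrow> 'v set \<Rightarrow> 'e set \<Rightarrow> nat" where
  "num_spanning_trees src tgt V F = card {T. spanning_tree src tgt V F T}"

text \<open>1-chains: functions from edges to real coefficients (w.r.t. the fixed orientation).\<close>
definition path_chain :: "('e \<times> bool) list \<Rightarrow> 'e \<Rightarrow> real" where
  "path_chain p f = sum_list (map (\<lambda>(e, d). if e = f then (if d then 1 else -1) else 0) p)"

definition D_chain :: "('e \<Rightarrow> 'v) \<Rightarrow> ('e \<Rightarrow> 'v) \<Rightarrow> 'e set \<Rightarrow> 'e \<Rightarrow> 'e \<Rightarrow> real" where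
  "D_chain src tgt T0 e =
     (if src e = tgt e then (\<lambda>_. 0)
      else path_chain (THE p. simple_path src tgt T0 (tgt e) p (src e)))"

definition Z_chain :: "('e \<Rightarrow> 'v) \<Rightarrow> ('e \<Rightarrow> 'v) \<Rightarrow> 'e set \<Rightarrow> 'e \<Rightarrow> 'e \<Rightarrow> real" where
  "Z_chain src tgt T0 e = (\<lambda>f. (if f = e then 1 else 0) + D_chain src tgt T0 e f)"

definition chain_inner :: "'e set \<Rightarrow> ('e \<Rightarrow> real) \<Rightarrow> ('e \<Rightarrow> real) \<Rightarrow> real" where
  "chain_inner E c d = (\<Sum>f\<in>E. c f * d f)"

text \<open>Mesh matrix for the listing es = [e_1,...,e_N] of E(G - T0) (0-based indices).\<close>
definition mesh_matrix :: "('e \<Rightarrow> 'v) \<Rightarrow> ('e \<Rightarrow> 'v) \<Rightarrow> 'e set \<Rightarrow> 'e set \<Rightarrow> 'e list \<Rightarrow> real mat" where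
  "mesh_matrix src tgt E T0 es = mat (length es) (length es)
     (\<lambda>(i, j). chain_inner E (Z_chain src tgt T0 (es ! i)) (Z_chain src tgt T0 (es ! j)))"

end

theory Submission
  imports Defs
begin

text \<open>Expanding det(X Id - M) along the diagonal, the coefficient of X^(N-j) is (-1)^j times the
  sum of the principal j x j minors of M. The principal minor indexed by K is the Gram determinant
  of the fundamental cycles Z k, k \<in> K, so by Cauchy-Binet it is the sum, over j-sets S of edges,
  of the squared minor of the matrix (Z k s), k \<in> K, s \<in> S. Let H = T0 \<union> {e_k | k \<in> K}. That minor
  vanishes unless H - S is a spanning tree of H: every Z k vanishes at an s outside H; if H - S is
  disconnected, a cut separating it gives a linear relation among the columns s \<in> S; if H - S
  contains a cycle, this cycle is a circulation supported on H, hence a combination of the Z k,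
  and gives a linear relation among the rows. If H - S is a spanning tree, the fundamental cycles
  with respect to H - S yield an integral inverse of (Z k s), so the minor is 1 or -1.\<close>

section \<open>Determinants over finite index sets\<close>

definition det_on :: "('a \<Rightarrow> 'a \<Rightarrow> 'b::comm_ring_1) \<Rightarrow> 'a set \<Rightarrow> 'b" where
  "det_on A K = (\<Sum>p | p permutes K. of_int (sign p) * (\<Prod>i\<in>K. A i (p i)))"

lemma det_on_cong:
  assumes "\<And>i k. i \<in> K \<Longrightarrow> k \<in> K \<Longrightarrow> A i k = B i k"
  shows "det_on A K = det_on B K"
  unfolding det_on_def
proof (intro sum.cong refl arg_cong2[where f = "(*)"] prod.cong)
  fix p i assume "p \<in> {p. p permutes K}" "i \<in> K"
  then show "A i (p i) = B i (p i)" by (intro assms) (simp_all add: permutes_in_image)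
qed

lemma det_on_empty [simp]: "det_on A {} = 1"
  by (simp add: det_on_def sign_id)

lemma det_on_permute_rows:
  assumes K: "finite K" and s: "s permutes K"
  shows "det_on (\<lambda>i k. A (s i) k) K = of_int (sign s) * det_on A K"
proof -
  have ps: "permutation s" using K s permutation_permutes by blast
  have "det_on (\<lambda>i k. A (s i) k) K =
      (\<Sum>p | p permutes K. of_int (sign p) * (\<Prod>i\<in>K. A i (p (inv_into UNIV s i))))"
    unfolding det_on_def
  proof (intro sum.cong refl arg_cong2[where f = "(*)"])
    fix p
    show "(\<Prod>i\<in>K. A (s i) (p i)) = (\<Prod>i\<in>K. A i (p (inv_into UNIV s i)))"
      using prod.reindex_bij_betw[OF permutes_imp_bij[OF s], of "\<lambda>i. A i (p (inv_into UNIV s i))"]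
        permutes_inverses(2)[OF s] by simp
  qed
  also have "\<dots> = (\<Sum>q | q permutes K. of_int (sign (q \<circ> s)) * (\<Prod>i\<in>K. A i (q i)))"
  proof (rule sum.reindex_bij_witness[where i = "\<lambda>q. q \<circ> s" and j = "\<lambda>p. p \<circ> inv_into UNIV s"])
    fix q assume "q \<in> {p. p permutes K}"
    then show "q \<circ> s \<circ> inv_into UNIV s = q" "q \<circ> s \<in> {p. p permutes K}"
      using permutes_inverses(1)[OF s] s permutes_compose by (auto simp: fun_eq_iff)
  next
    fix p assume "p \<in> {p. p permutes K}"
    then show "p \<circ> inv_into UNIV s \<circ> s = p" "p \<circ> inv_into UNIV s \<in> {p. p permutes K}"
      using permutes_inverses(2)[OF s] permutes_compose[OF permutes_inv[OF s]]
      by (auto simp: fun_eq_iff)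
    then show "of_int (sign (p \<circ> inv_into UNIV s \<circ> s)) * (\<Prod>i\<in>K. A i ((p \<circ> inv_into UNIV s) i)) =
        of_int (sign p) * (\<Prod>i\<in>K. A i (p (inv_into UNIV s i)))"
      by simp
  qed
  also have "\<dots> = of_int (sign s) * det_on A K"
    unfolding det_on_def sum_distrib_left
  proof (intro sum.cong refl)
    fix q assume "q \<in> {p. p permutes K}"
    then have "permutation q" using K permutation_permutes by blast
    then show "of_int (sign (q \<circ> s)) * (\<Prod>i\<in>K. A i (q i)) =
        of_int (sign s) * (of_int (sign q) * (\<Prod>i\<in>K. A i (q i)))"
      using ps by (simp add: sign_compose)
  qed
  finally show ?thesis .
qed

lemma det_on_transpose:
  assumes K: "finite K"
  shows "det_on (\<lambda>i k. A k i) K = det_on A K"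
  unfolding det_on_def
proof (rule sum.reindex_bij_witness[where i = "inv_into UNIV" and j = "inv_into UNIV"])
  fix p assume "p \<in> {p. p permutes K}"
  then have p: "p permutes K" by simp
  then show "inv_into UNIV (inv_into UNIV p) = p" "inv_into UNIV p \<in> {p. p permutes K}"
    by (simp_all add: permutes_inv_inv permutes_inv)
  have "(\<Prod>i\<in>K. A i (inv_into UNIV p i)) = (\<Prod>i\<in>K. A (p i) i)"
    using prod.reindex_bij_betw[OF permutes_imp_bij[OF p], of "\<lambda>i. A i (inv_into UNIV p i)"]
      permutes_inverses(2)[OF p] by simp
  moreover have "sign (inv_into UNIV p) = sign p"
    using K p permutation_permutes sign_inverse by blast
  ultimately show "of_int (sign (inv_into UNIV p)) * (\<Prod>i\<in>K. A i (inv_into UNIV p i)) =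
      of_int (sign p) * (\<Prod>i\<in>K. A (p i) i)" by simp
next
  fix p assume "p \<in> {p. p permutes K}"
  then show "inv_into UNIV (inv_into UNIV p) = p" "inv_into UNIV p \<in> {p. p permutes K}"
    by (simp_all add: permutes_inv_inv permutes_inv)
qed

lemma det_on_identical_rows:
  fixes A :: "'a \<Rightarrow> 'a \<Rightarrow> 'b::{idom, ring_char_0}"
  assumes K: "finite K" and ij: "i \<in> K" "j \<in> K" "i \<noteq> j" and eq: "\<And>k. A i k = A j k"
  shows "det_on A K = 0"
proof -
  have "(\<lambda>l k. A (Transposition.transpose i j l) k) = A"
    using eq by (auto simp: fun_eq_iff transpose_def)
  then have "det_on A K = - det_on A K"
    using det_on_permute_rows[OF K permutes_swap_id[OF ij(1,2)], of A] ij(3)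
    by (simp add: sign_swap_id)
  then show ?thesis by simp
qed

lemma det_on_Cauchy_Binet:
  fixes A :: "'a \<Rightarrow> 'f \<Rightarrow> 'b::{idom, ring_char_0}"
  assumes K: "finite K" and F: "finite F"
  shows "det_on (\<lambda>i k. \<Sum>f\<in>F. A i f * B f k) K =
    (\<Sum>g | g \<in> K \<rightarrow>\<^sub>E F \<and> inj_on g K. (\<Prod>i\<in>K. A i (g i)) * det_on (\<lambda>i k. B (g i) k) K)"
proof -
  have "det_on (\<lambda>i k. \<Sum>f\<in>F. A i f * B f k) K =
     (\<Sum>p | p permutes K. \<Sum>g\<in>K \<rightarrow>\<^sub>E F. of_int (sign p) * ((\<Prod>i\<in>K. A i (g i)) * (\<Prod>i\<in>K. B (g i) (p i))))"
    unfolding det_on_def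
    by (intro sum.cong refl, subst prod_sum_PiE[OF K], use F in simp,
        simp add: sum_distrib_left prod.distrib)
  also have "\<dots> = (\<Sum>g\<in>K \<rightarrow>\<^sub>E F. (\<Prod>i\<in>K. A i (g i)) * det_on (\<lambda>i k. B (g i) k) K)"
    unfolding det_on_def sum_distrib_left by (subst sum.swap) (simp add: algebra_simps)
  also have "\<dots> = (\<Sum>g | g \<in> K \<rightarrow>\<^sub>E F \<and> inj_on g K. (\<Prod>i\<in>K. A i (g i)) * det_on (\<lambda>i k. B (g i) k) K)"
  proof (rule sum.mono_neutral_right)
    show "finite (K \<rightarrow>\<^sub>E F)" using K F by (simp add: finite_PiE)
  next
    show "\<forall>g\<in>(K \<rightarrow>\<^sub>E F) - {g. g \<in> K \<rightarrow>\<^sub>E F \<and> inj_on g K}.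
        (\<Prod>i\<in>K. A i (g i)) * det_on (\<lambda>i k. B (g i) k) K = 0"
    proof
      fix g assume "g \<in> (K \<rightarrow>\<^sub>E F) - {g. g \<in> K \<rightarrow>\<^sub>E F \<and> inj_on g K}"
      then obtain i j where "i \<in> K" "j \<in> K" "i \<noteq> j" "g i = g j" unfolding inj_on_def by blast
      then show "(\<Prod>i\<in>K. A i (g i)) * det_on (\<lambda>i k. B (g i) k) K = 0"
        using det_on_identical_rows[OF K, of i j "\<lambda>i k. B (g i) k"] by simp
    qed
  qed auto
  finally show ?thesis .
qed

lemma bij_betw_compose_permutes:
  assumes g0: "bij_betw g0 K S"
  shows "bij_betw (\<lambda>p. restrict (g0 \<circ> p) K) {p. p permutes K} {g. g \<in> K \<rightarrow>\<^sub>E S \<and> bij_betw g K S}"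
proof (rule bij_betw_byWitness[where f' = "\<lambda>g x. if x \<in> K then inv_into K g0 (g x) else x"])
  show "\<forall>p\<in>{p. p permutes K}. (\<lambda>x. if x \<in> K then inv_into K g0 (restrict (g0 \<circ> p) K x) else x) = p"
    using g0 permutes_in_image permutes_not_in by (fastforce simp: bij_betw_def)
  show "\<forall>g\<in>{g. g \<in> K \<rightarrow>\<^sub>E S \<and> bij_betw g K S}.
      restrict (g0 \<circ> (\<lambda>x. if x \<in> K then inv_into K g0 (g x) else x)) K = g"
  proof
    fix g assume g: "g \<in> {g. g \<in> K \<rightarrow>\<^sub>E S \<and> bij_betw g K S}"
    have "g0 (inv_into K g0 (g x)) = g x" if "x \<in> K" for x
      using g g0 that by (intro f_inv_into_f) (auto simp: bij_betw_def)
    then show "restrict (g0 \<circ> (\<lambda>x. if x \<in> K then inv_into K g0 (g x) else x)) K = g"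
      using g by (auto simp: fun_eq_iff PiE_def extensional_def)
  qed
  show "(\<lambda>p. restrict (g0 \<circ> p) K) ` {p. p permutes K} \<subseteq> {g. g \<in> K \<rightarrow>\<^sub>E S \<and> bij_betw g K S}"
  proof clarify
    fix p assume p: "p permutes K"
    have "bij_betw (restrict (g0 \<circ> p) K) K S"
      using bij_betw_trans[OF permutes_imp_bij[OF p] g0] by (rule bij_betw_cong[THEN iffD1, rotated]) simp
    then show "restrict (g0 \<circ> p) K \<in> K \<rightarrow>\<^sub>E S \<and> bij_betw (restrict (g0 \<circ> p) K) K S"
      by (auto simp: bij_betw_def)
  qed
  show "(\<lambda>g x. if x \<in> K then inv_into K g0 (g x) else x) ` {g. g \<in> K \<rightarrow>\<^sub>E S \<and> bij_betw g K S}
      \<subseteq> {p. p permutes K}"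
  proof clarify
    fix g assume "g \<in> K \<rightarrow>\<^sub>E S" "bij_betw g K S"
    then have "bij_betw (inv_into K g0 \<circ> g) K K"
      using bij_betw_trans bij_betw_inv_into[OF g0] by blast
    then have "bij_betw (\<lambda>x. if x \<in> K then inv_into K g0 (g x) else x) K K"
      by (rule bij_betw_cong[THEN iffD1, rotated]) simp
    then show "(\<lambda>x. if x \<in> K then inv_into K g0 (g x) else x) permutes K"
      by (rule bij_imp_permutes) simp
  qed
qed

lemma det_on_sum_bijections:
  fixes A :: "'a \<Rightarrow> 's \<Rightarrow> 'b::comm_ring_1"
  assumes K: "finite K" and g0: "bij_betw g0 K S"
  shows "(\<Sum>g | g \<in> K \<rightarrow>\<^sub>E S \<and> bij_betw g K S. (\<Prod>i\<in>K. A i (g i)) * det_on (\<lambda>i k. B (g i) k) K) =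
    det_on (\<lambda>i k. A i (g0 k)) K * det_on (\<lambda>i k. B (g0 i) k) K"
proof -
  have "(\<Sum>g | g \<in> K \<rightarrow>\<^sub>E S \<and> bij_betw g K S. (\<Prod>i\<in>K. A i (g i)) * det_on (\<lambda>i k. B (g i) k) K) =
      (\<Sum>p | p permutes K. (\<Prod>i\<in>K. A i (g0 (p i))) * det_on (\<lambda>i k. B (g0 (p i)) k) K)"
    by (subst sum.reindex_bij_betw[OF bij_betw_compose_permutes[OF g0], symmetric])
       (intro sum.cong refl arg_cong2[where f = "(*)"] prod.cong det_on_cong; simp)
  also have "\<dots> = (\<Sum>p | p permutes K. (\<Prod>i\<in>K. A i (g0 (p i))) * (of_int (sign p) * det_on (\<lambda>i k. B (g0 i) k) K))"
    by (intro sum.cong refl) (simp add: det_on_permute_rows[OF K, where A = "\<lambda>i. B (g0 i)"])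
  also have "\<dots> = det_on (\<lambda>i k. A i (g0 k)) K * det_on (\<lambda>i k. B (g0 i) k) K"
    by (simp add: det_on_def sum_distrib_right algebra_simps)
  finally show ?thesis .
qed

lemma det_on_mult:
  fixes A :: "'a \<Rightarrow> 'a \<Rightarrow> 'b::{idom, ring_char_0}"
  assumes K: "finite K"
  shows "det_on (\<lambda>i k. \<Sum>j\<in>K. A i j * B j k) K = det_on A K * det_on B K"
proof -
  have "{g. g \<in> K \<rightarrow>\<^sub>E K \<and> inj_on g K} = {g. g \<in> K \<rightarrow>\<^sub>E K \<and> bij_betw g K K}"
    using endo_inj_surj[OF K] by (auto simp: bij_betw_def)
  then have "det_on (\<lambda>i k. \<Sum>j\<in>K. A i j * B j k) K =
      (\<Sum>g | g \<in> K \<rightarrow>\<^sub>E K \<and> bij_betw g K K. (\<Prod>i\<in>K. A i (g i)) * det_on (\<lambda>i k. B (g i) k) K)"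
    using det_on_Cauchy_Binet[OF K K, of A B] by simp
  also have "\<dots> = det_on A K * det_on B K"
    using det_on_sum_bijections[OF K bij_betw_id, of A B] by simp
  finally show ?thesis .
qed

lemma det_on_id:
  assumes K: "finite K"
  shows "det_on (\<lambda>i k. of_bool (i = k)) K = (1::'b::comm_ring_1)"
proof -
  have "det_on (\<lambda>i k. of_bool (i = k)) K = (\<Sum>p | p permutes K. of_bool (p = id) :: 'b)"
    unfolding det_on_def
  proof (intro sum.cong refl)
    fix p assume p: "p \<in> {p. p permutes K}"
    show "of_int (sign p) * (\<Prod>i\<in>K. of_bool (i = p i)) = (of_bool (p = id) :: 'b)"
    proof (cases "p = id")
      case False
      then obtain i where "p i \<noteq> i" by (metis eq_id_iff)
      moreover have "i \<in> K" using p \<open>p i \<noteq> i\<close> permutes_not_in by fastforce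
      ultimately have "(\<Prod>i\<in>K. of_bool (i = p i)) = (0::'b)"
        using K by (intro prod_zero) (auto intro!: bexI[of _ i])
      then show ?thesis using False by simp
    qed (simp add: sign_id)
  qed
  also have "\<dots> = 1" using K permutes_id by (simp add: finite_permutations)
  finally show ?thesis .
qed

lemma det_on_id_replace_column:
  assumes K: "finite K" and k0: "k0 \<in> K"
  shows "det_on (\<lambda>k k'. if k' = k0 then a k else of_bool (k = k')) K = a k0"
proof -
  define C where "C = (\<lambda>k k'. if k' = k0 then a k else of_bool (k = k'))"
  have "det_on C K = (\<Sum>p | p permutes K. if p = id then a k0 else 0)"
    unfolding det_on_def
  proof (intro sum.cong refl)
    fix p assume "p \<in> {p. p permutes K}"
    then have p: "p permutes K" by simp
    show "of_int (sign p) * (\<Prod>i\<in>K. C i (p i)) = (if p = id then a k0 else 0)"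
    proof (cases "p = id")
      case True
      have "(\<Prod>i\<in>K. C i i) = C k0 k0 * (\<Prod>i\<in>K - {k0}. C i i)"
        using K k0 by (simp add: prod.remove)
      then show ?thesis using True by (simp add: sign_id C_def)
    next
      case False
      then obtain i where i: "p i \<noteq> i" by (metis eq_id_iff)
      then have iK: "i \<in> K" using p permutes_not_in by fastforce
      have "\<exists>j\<in>K. C j (p j) = 0"
      proof (cases "p i = k0")
        case True
        then have "p k0 \<noteq> k0" using i permutes_inj[OF p] by (metis injD)
        then show ?thesis using k0 unfolding C_def by (intro bexI[of _ k0]) auto
      qed (use iK i in \<open>auto simp: C_def\<close>)
      then have "(\<Prod>i\<in>K. C i (p i)) = 0" using K by (intro prod_zero) auto
      then show ?thesis using False by simp
    qed
  qed
  also have "\<dots> = a k0" using K permutes_id by (simp add: finite_permutations)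
  finally show ?thesis by (simp add: C_def)
qed

lemma det_on_dependent_columns:
  fixes B :: "'a \<Rightarrow> 'a \<Rightarrow> 'b::{idom, ring_char_0}"
  assumes K: "finite K" and k0: "k0 \<in> K" "a k0 \<noteq> 0"
    and dep: "\<And>i. i \<in> K \<Longrightarrow> (\<Sum>k\<in>K. B i k * a k) = 0"
  shows "det_on B K = 0"
proof -
  define C where "C = (\<lambda>k k'. if k' = k0 then a k else of_bool (k = k'))"
  \<comment> \<open>Column k0 of the product is B a = 0.\<close>
  have "det_on (\<lambda>i k. \<Sum>j\<in>K. B i j * C j k) K = 0"
    unfolding det_on_def
  proof (intro sum.neutral ballI)
    fix p assume "p \<in> {p. p permutes K}"
    then have p: "p permutes K" by simp
    let ?i = "inv_into UNIV p k0"
    have "?i \<in> K" "p ?i = k0"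
      using p k0 permutes_inverses(1)[OF p] by (simp_all add: permutes_inv permutes_in_image)
    then have "(\<Prod>i\<in>K. \<Sum>j\<in>K. B i j * C j (p i)) = 0"
      using K dep unfolding C_def by (intro prod_zero) (auto intro!: bexI[of _ ?i])
    then show "of_int (sign p) * (\<Prod>i\<in>K. \<Sum>j\<in>K. B i j * C j (p i)) = 0" by simp
  qed
  moreover have "det_on C K = a k0"
    unfolding C_def by (rule det_on_id_replace_column[OF K k0(1)])
  ultimately have "det_on B K * a k0 = 0" using det_on_mult[OF K, of B C] by simp
  then show ?thesis using k0 by simp
qed

lemma det_on_dependent_rows:
  fixes B :: "'a \<Rightarrow> 'a \<Rightarrow> 'b::{idom, ring_char_0}"
  assumes K: "finite K" and k0: "k0 \<in> K" "a k0 \<noteq> 0"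
    and dep: "\<And>k. k \<in> K \<Longrightarrow> (\<Sum>i\<in>K. a i * B i k) = 0"
  shows "det_on B K = 0"
proof -
  have "det_on (\<lambda>i k. B k i) K = 0"
    by (rule det_on_dependent_columns[of K k0 a]) (use K k0 dep in \<open>simp_all add: mult.commute\<close>)
  then show ?thesis using det_on_transpose[OF K, of B] by simp
qed

lemma det_on_Ints:
  assumes "\<And>i k. i \<in> K \<Longrightarrow> k \<in> K \<Longrightarrow> A i k \<in> \<int>"
  shows "det_on A K \<in> \<int>"
  unfolding det_on_def
proof (intro Ints_sum Ints_mult Ints_prod)
  fix p i assume "p \<in> {p. p permutes K}" "i \<in> K"
  then show "A i (p i) \<in> \<int>" using assms permutes_in_image by fastforce
qed auto

lemma det_on_uminus:
  assumes "finite K"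
  shows "det_on (\<lambda>i k. - A i k) K = (-1) ^ card K * det_on A K"
  unfolding det_on_def sum_distrib_left
proof (intro sum.cong refl)
  fix p
  have "(\<Prod>i\<in>K. - A i (p i)) = (\<Prod>i\<in>K. (-1) * A i (p i))" by simp
  also have "\<dots> = (\<Prod>i\<in>K. -1) * (\<Prod>i\<in>K. A i (p i))" by (rule prod.distrib)
  finally have "(\<Prod>i\<in>K. - A i (p i)) = (-1) ^ card K * (\<Prod>i\<in>K. A i (p i))" by simp
  then show "of_int (sign p) * (\<Prod>i\<in>K. - A i (p i)) =
      (-1) ^ card K * (of_int (sign p) * (\<Prod>i\<in>K. A i (p i)))"
    by (simp add: algebra_simps)
qed

lemma det_on_const_poly: "det_on (\<lambda>i k. [:A i k:]) K = [:det_on A K:]"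
  unfolding det_on_def prod_to_poly
  by (simp add: of_int_poly sum_to_poly[symmetric] mult_ac)

lemma Ints_mult_eq_1_imp_square_eq_1:
  fixes a :: "'a::{ring_1, ring_char_0}"
  assumes "a \<in> \<int>" "b \<in> \<int>" "a * b = 1"
  shows "a * a = 1"
proof -
  obtain m n where mn: "a = of_int m" "b = of_int n" using assms(1,2) by (auto elim!: Ints_cases)
  then have "m * n = 1" using assms(3) by (metis of_int_eq_1_iff of_int_mult)
  then have "m = 1 \<or> m = -1" by (rule pos_zmult_eq_1_iff_lemma)
  then show ?thesis using mn by auto
qed

lemma det_on_add_diagonal:
  assumes I: "finite I"
  shows "det_on (\<lambda>i j. (if i = j then x else 0) + B i j) I =
    (\<Sum>K\<in>Pow I. x ^ card (I - K) * det_on B K)"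
proof -
  have "det_on (\<lambda>i j. (if i = j then x else 0) + B i j) I =
     (\<Sum>p | p permutes I. \<Sum>K\<in>Pow I. of_int (sign p) * ((\<Prod>i\<in>K. B i (p i)) * (\<Prod>i\<in>I - K. if i = p i then x else 0)))"
    unfolding det_on_def
    by (intro sum.cong refl) (simp add: add.commute prod_add[OF I] sum_distrib_left)
  also have "\<dots> = (\<Sum>K\<in>Pow I. \<Sum>p | p permutes I. of_int (sign p) * ((\<Prod>i\<in>K. B i (p i)) * (\<Prod>i\<in>I - K. if i = p i then x else 0)))"
    by (rule sum.swap)
  also have "\<dots> = (\<Sum>K\<in>Pow I. x ^ card (I - K) * det_on B K)"
  proof (intro sum.cong refl)
    fix K assume "K \<in> Pow I"
    then have KI: "K \<subseteq> I" by simp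
    have fixes_rest: "(\<Prod>i\<in>I - K. if i = p i then x else 0) =
        (if \<forall>i\<in>I - K. p i = i then x ^ card (I - K) else 0)" for p
    proof (cases "\<forall>i\<in>I - K. p i = i")
      case False
      then obtain i where "i \<in> I - K" "p i \<noteq> i" by blast
      then show ?thesis using I False by (subst prod_zero) (auto intro!: bexI[of _ i])
    qed simp
    have "{p. p permutes I \<and> (\<forall>i\<in>I - K. p i = i)} = {p. p permutes K}"
      using permutes_subset[OF _ KI] permutes_not_in unfolding permutes_def by blast
    then have "(\<Sum>p | p permutes I. of_int (sign p) * ((\<Prod>i\<in>K. B i (p i)) * (\<Prod>i\<in>I - K. if i = p i then x else 0)))
       = (\<Sum>p | p permutes K. x ^ card (I - K) * (of_int (sign p) * (\<Prod>i\<in>K. B i (p i))))"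
      unfolding fixes_rest using I
      by (simp add: sum.inter_filter[symmetric] finite_permutations if_distrib[of "(*) _"] mult_ac
          cong: if_cong)
    then show "(\<Sum>p | p permutes I. of_int (sign p) * ((\<Prod>i\<in>K. B i (p i)) * (\<Prod>i\<in>I - K. if i = p i then x else 0)))
       = x ^ card (I - K) * det_on B K"
      by (simp add: det_on_def sum_distrib_left)
  qed
  finally show ?thesis .
qed

lemma char_poly_eq_sum_principal_minors:
  fixes A :: "'a::{idom, ring_char_0} mat"
  assumes A: "A \<in> carrier_mat n n"
  shows "char_poly A =
    (\<Sum>j = 0..n. monom ((-1) ^ j * (\<Sum>K | K \<subseteq> {..<n} \<and> card K = j. det_on (\<lambda>i k. A $$ (i, k)) K)) (n - j))"
proof -
  let ?M = "\<lambda>K. det_on (\<lambda>i k. A $$ (i, k)) K"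
  have "char_poly A = det_on (\<lambda>i j. char_poly_matrix A $$ (i, j)) {..<n}"
    unfolding char_poly_def det_def'[OF char_poly_matrix_closed[OF A]] det_on_def
    by (simp add: atLeast0LessThan)
  also have "\<dots> = det_on (\<lambda>i j. (if i = j then [:0, 1:] else 0) + [:- A $$ (i, j):]) {..<n}"
    using A by (intro det_on_cong) (simp add: char_poly_matrix_def)
  also have "\<dots> = (\<Sum>K\<in>Pow {..<n}. [:0, 1:] ^ card ({..<n} - K) * det_on (\<lambda>i j. [:- A $$ (i, j):]) K)"
    by (rule det_on_add_diagonal) simp
  also have "\<dots> = (\<Sum>K\<in>Pow {..<n}. monom ((-1) ^ card K * ?M K) (n - card K))"
  proof (intro sum.cong refl)
    fix K assume "K \<in> Pow {..<n}"
    then have "K \<subseteq> {..<n}" "finite K" using finite_subset by auto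
    then show "[:0, 1:] ^ card ({..<n} - K) * det_on (\<lambda>i j. [:- A $$ (i, j):]) K =
        monom ((-1) ^ card K * ?M K) (n - card K)"
      by (simp add: det_on_const_poly det_on_uminus card_Diff_subset monom_altdef)
  qed
  also have "\<dots> = (\<Sum>j = 0..n. \<Sum>K | K \<in> Pow {..<n} \<and> card K = j. monom ((-1) ^ card K * ?M K) (n - card K))"
    by (rule sum.group[symmetric]) (auto simp: card_mono[of "{..<n}", simplified] intro: le_trans)
  also have "\<dots> = (\<Sum>j = 0..n. monom ((-1) ^ j * (\<Sum>K | K \<subseteq> {..<n} \<and> card K = j. ?M K)) (n - j))"
    by (intro sum.cong refl) (simp add: monom_sum sum_distrib_left)
  finally show ?thesis .
qed

section \<open>Walks\<close>

context
  fixes src tgt :: "'e \<Rightarrow> 'v"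
begin

definition step_src :: "'e \<times> bool \<Rightarrow> 'v" where
  "step_src x = (if snd x then src (fst x) else tgt (fst x))"

definition step_tgt :: "'e \<times> bool \<Rightarrow> 'v" where
  "step_tgt x = (if snd x then tgt (fst x) else src (fst x))"

lemma walk_Cons_iff:
  "walk src tgt F u (x # p) v \<longleftrightarrow>
     fst x \<in> F \<and> step_src x = u \<and> walk src tgt F (step_tgt x) p v"
  by (cases x) (auto simp: step_src_def step_tgt_def)

lemma walk_verts_Cons: "walk_verts src tgt u (x # p) = u # walk_verts src tgt (step_tgt x) p"
  by (cases x) (auto simp: step_tgt_def)

lemma walk_append:
  "walk src tgt F u (p @ q) v \<longleftrightarrow> (\<exists>w. walk src tgt F u p w \<and> walk src tgt F w q v)"
  by (induction p arbitrary: u) (auto simp: walk_Cons_iff)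

lemma walk_snoc:
  "walk src tgt F u p (src e) \<Longrightarrow> e \<in> F \<Longrightarrow> walk src tgt F u (p @ [(e, True)]) (tgt e)"
  "walk src tgt F u p (tgt e) \<Longrightarrow> e \<in> F \<Longrightarrow> walk src tgt F u (p @ [(e, False)]) (src e)"
  by (auto simp: walk_append)

lemma walk_edges_subset: "walk src tgt F u p v \<Longrightarrow> fst ` set p \<subseteq> F"
  by (induction p arbitrary: u) (auto simp: walk_Cons_iff)

lemma walk_mono: "walk src tgt F u p v \<Longrightarrow> fst ` set p \<subseteq> F' \<Longrightarrow> walk src tgt F' u p v"
  by (induction p arbitrary: u) (auto simp: walk_Cons_iff)

definition rev_walk :: "('e \<times> bool) list \<Rightarrow> ('e \<times> bool) list" where
  "rev_walk p = rev (map (\<lambda>(e, d). (e, \<not> d)) p)"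

lemma walk_rev_walk: "walk src tgt F u p v \<Longrightarrow> walk src tgt F v (rev_walk p) u"
proof (induction p arbitrary: u)
  case (Cons x p)
  then show ?case by (cases x) (auto simp: rev_walk_def walk_append split: if_splits)
qed (simp add: rev_walk_def)

lemma walk_end_in_verts: "walk src tgt F u p v \<Longrightarrow> v \<in> set (walk_verts src tgt u p)"
  by (induction p arbitrary: u) (auto simp: walk_Cons_iff walk_verts_Cons)

lemma walk_edge_ends_in_verts:
  "walk src tgt F u p v \<Longrightarrow> x \<in> set p \<Longrightarrow>
    src (fst x) \<in> set (walk_verts src tgt u p) \<and> tgt (fst x) \<in> set (walk_verts src tgt u p)"
proof (induction p arbitrary: u)
  case (Cons y p)
  have "step_tgt y \<in> set (walk_verts src tgt (step_tgt y) p)"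
    by (cases p) (auto simp: walk_verts_Cons)
  then show ?case using Cons
    by (cases "x = y") (auto simp: walk_Cons_iff walk_verts_Cons step_src_def step_tgt_def split: if_splits)
qed simp

lemma simple_path_from_vertex:
  "walk src tgt F w q v \<Longrightarrow> distinct (walk_verts src tgt w q) \<Longrightarrow> u \<in> set (walk_verts src tgt w q)
   \<Longrightarrow> \<exists>q'. simple_path src tgt F u q' v"
proof (induction q arbitrary: w)
  case Nil then show ?case by (auto simp: simple_path_def intro!: exI[of _ "[]"])
next
  case (Cons x q)
  show ?case
  proof (cases "u = w")
    case True
    then show ?thesis using Cons.prems by (auto simp: simple_path_def)
  next
    case False
    then show ?thesis using Cons by (auto simp: walk_Cons_iff walk_verts_Cons)
  qed
qed

lemma walk_imp_simple_path: "walk src tgt F u p v \<Longrightarrow> \<exists>q. simple_path src tgt F u q v"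
proof (induction p arbitrary: u)
  case Nil then show ?case by (intro exI[of _ "[]"]) (auto simp: simple_path_def)
next
  case (Cons x p)
  then obtain q where q: "simple_path src tgt F (step_tgt x) q v"
    by (auto simp: walk_Cons_iff)
  show ?case
  proof (cases "u \<in> set (walk_verts src tgt (step_tgt x) q)")
    case True
    then show ?thesis using q simple_path_from_vertex unfolding simple_path_def by blast
  next
    case False
    then show ?thesis using q Cons.prems
      by (intro exI[of _ "x # q"]) (auto simp: simple_path_def walk_Cons_iff walk_verts_Cons)
  qed
qed

lemma acyclic_edgesD:
  assumes "acyclic_edges src tgt F" "e \<in> F"
  shows "\<not> walk src tgt (F - {e}) (src e) p (tgt e)" "\<not> walk src tgt (F - {e}) (tgt e) p (src e)"
  using assms walk_rev_walk unfolding acyclic_edges_def by blast+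

lemma walk_avoids_edges_at:
  "walk src tgt F w p v \<Longrightarrow> u \<notin> set (walk_verts src tgt w p) \<Longrightarrow> src e = u \<or> tgt e = u
   \<Longrightarrow> e \<notin> fst ` set p"
  using walk_edge_ends_in_verts by fastforce

text \<open>Otherwise p, q reversed and the step y reversed form a walk between the ends of
  fst x avoiding fst x.\<close>

lemma acyclic_same_first_step:
  assumes ac: "acyclic_edges src tgt F"
    and x: "fst x \<in> F" "step_src x = u" "walk src tgt F (step_tgt x) p v"
      "u \<notin> set (walk_verts src tgt (step_tgt x) p)"
    and y: "fst y \<in> F" "step_src y = u" "walk src tgt F (step_tgt y) q v"
      "u \<notin> set (walk_verts src tgt (step_tgt y) q)"
  shows "x = y"
proof (rule ccontr)
  assume "x \<noteq> y"
  let ?e = "fst x"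
  have ends: "src ?e = u \<or> tgt ?e = u" using x(2) by (auto simp: step_src_def split: if_splits)
  show False
  proof (cases "fst y = ?e")
    case True
    with \<open>x \<noteq> y\<close> have "src ?e = tgt ?e"
      using x(2) y(2) by (auto simp: step_src_def prod_eq_iff split: if_splits)
    then show False using acyclic_edgesD(1)[OF ac x(1), of "[]"] by simp
  next
    case False
    have "fst ` set p \<subseteq> F - {?e}" "fst ` set q \<subseteq> F - {?e}"
      using walk_edges_subset[OF x(3)] walk_avoids_edges_at[OF x(3,4) ends]
        walk_edges_subset[OF y(3)] walk_avoids_edges_at[OF y(3,4) ends] by blast+
    then have "walk src tgt (F - {?e}) (step_tgt x) p v"
      "walk src tgt (F - {?e}) v (rev_walk q) (step_tgt y)"
      by (simp_all add: walk_mono[OF x(3)] walk_rev_walk[OF walk_mono[OF y(3)]])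
    moreover have "walk src tgt (F - {?e}) (step_tgt y) [(fst y, \<not> snd y)] u"
      using y(1,2) False by (auto simp: step_src_def step_tgt_def)
    ultimately have "walk src tgt (F - {?e}) (step_tgt x) (p @ rev_walk q @ [(fst y, \<not> snd y)]) (step_src x)"
      using x(2) walk_append by blast
    then show False
      using acyclic_edgesD[OF ac x(1)] by (auto simp: step_src_def step_tgt_def split: if_splits)
  qed
qed

lemma simple_path_unique:
  assumes ac: "acyclic_edges src tgt F"
  shows "simple_path src tgt F u p v \<Longrightarrow> simple_path src tgt F u q v \<Longrightarrow> p = q"
proof (induction p arbitrary: u q)
  case Nil
  then show ?case
    using walk_end_in_verts[of F _ _ v]
    by (cases q) (auto simp: simple_path_def walk_Cons_iff walk_verts_Cons)
next
  case (Cons x p)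
  show ?case
  proof (cases q)
    case Nil
    then show ?thesis using Cons.prems walk_end_in_verts[of F "step_tgt x" p v]
      by (auto simp: simple_path_def walk_Cons_iff walk_verts_Cons)
  next
    case (Cons y q')
    with Cons.prems have "x = y"
      by (intro acyclic_same_first_step[OF ac])
         (auto simp: simple_path_def walk_Cons_iff walk_verts_Cons)
    with Cons.prems Cons.IH[of "step_tgt x" q'] \<open>q = y # q'\<close> show ?thesis
      by (auto simp: simple_path_def walk_Cons_iff walk_verts_Cons)
  qed
qed

end

section \<open>Chains, cuts and circulations\<close>

definition cycle_chain :: "'e \<Rightarrow> ('e \<times> bool) list \<Rightarrow> 'e \<Rightarrow> real" where
  "cycle_chain e p f = of_bool (f = e) + path_chain p f"

lemma path_chain_Nil [simp]: "path_chain [] f = 0"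
  by (simp add: path_chain_def)

lemma path_chain_Cons:
  "path_chain (x # p) f = (if fst x = f then (if snd x then 1 else -1) else 0) + path_chain p f"
  by (cases x) (simp add: path_chain_def)

lemma path_chain_eq_0: "f \<notin> fst ` set p \<Longrightarrow> path_chain p f = 0"
  by (induction p) (auto simp: path_chain_Cons)

lemma path_chain_Ints: "path_chain p f \<in> \<int>"
  by (induction p) (auto simp: path_chain_Cons)

lemma cycle_chain_Ints: "cycle_chain e p f \<in> \<int>"
  by (simp add: cycle_chain_def path_chain_Ints)

lemma chain_inner_of_bool_eq:
  assumes "finite E" "e \<in> E"
  shows "chain_inner E (\<lambda>f. of_bool (f = e)) d = d e"
  using assms by (simp add: chain_inner_def)

context
  fixes src tgt :: "'e \<Rightarrow> 'v"
begin

lemma cycle_chain_outside: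
  "walk src tgt F u p v \<Longrightarrow> f \<notin> F \<Longrightarrow> cycle_chain e p f = of_bool (f = e)"
  using walk_edges_subset path_chain_eq_0 unfolding cycle_chain_def by fastforce

definition cut_chain :: "'v set \<Rightarrow> 'e \<Rightarrow> real" where
  "cut_chain U f = of_bool (src f \<in> U) - of_bool (tgt f \<in> U)"

text \<open>Orthogonality to all cuts is Kirchhoff's current law at every vertex.\<close>

definition circulation :: "'e set \<Rightarrow> ('e \<Rightarrow> real) \<Rightarrow> bool" where
  "circulation E y \<longleftrightarrow> (\<forall>U. chain_inner E y (cut_chain U) = 0)"

lemma chain_inner_path_chain_cut:
  assumes E: "finite E" and F: "F \<subseteq> E"
  shows "walk src tgt F u p v \<Longrightarrow>
    chain_inner E (path_chain p) (cut_chain U) = of_bool (u \<in> U) - of_bool (v \<in> U)"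
proof (induction p arbitrary: u)
  case (Cons x p)
  then have x: "fst x \<in> E" "step_src src tgt x = u" "walk src tgt F (step_tgt src tgt x) p v"
    using F by (auto simp: walk_Cons_iff)
  have "path_chain (x # p) = (\<lambda>f. (if snd x then 1 else -1) * of_bool (f = fst x) + path_chain p f)"
    by (auto simp: fun_eq_iff path_chain_Cons)
  then have "chain_inner E (path_chain (x # p)) (cut_chain U) =
      (if snd x then 1 else -1) * cut_chain U (fst x) + chain_inner E (path_chain p) (cut_chain U)"
    using E x(1) by (simp add: chain_inner_def distrib_right sum.distrib sum_distrib_left[symmetric] mult.assoc)
  also have "\<dots> = (if snd x then 1 else -1) * cut_chain U (fst x) +
      (of_bool (step_tgt src tgt x \<in> U) - of_bool (v \<in> U))"
    using Cons.IH[OF x(3)] by simp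
  moreover have "(if snd x then 1 else -1) * cut_chain U (fst x) + of_bool (step_tgt src tgt x \<in> U) =
      (of_bool (u \<in> U) :: real)"
    using x(2) by (auto simp: cut_chain_def step_src_def step_tgt_def)
  ultimately show ?case by simp
qed (simp add: chain_inner_def)

lemma circulation_cycle_chain:
  assumes "finite E" "F \<subseteq> E" "e \<in> E" "walk src tgt F (tgt e) p (src e)"
  shows "circulation E (cycle_chain e p)"
  unfolding circulation_def
proof
  fix U
  have "chain_inner E (cycle_chain e p) (cut_chain U) =
      chain_inner E (\<lambda>f. of_bool (f = e)) (cut_chain U) + chain_inner E (path_chain p) (cut_chain U)"
    by (simp add: chain_inner_def cycle_chain_def distrib_right sum.distrib)
  then show "chain_inner E (cycle_chain e p) (cut_chain U) = 0"
    using assms by (simp add: chain_inner_of_bool_eq chain_inner_path_chain_cut cut_chain_def)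
qed

lemma circulation_diff_sum:
  assumes y: "circulation E y" and b: "\<And>s. s \<in> S \<Longrightarrow> circulation E (b s)"
  shows "circulation E (\<lambda>f. y f - (\<Sum>s\<in>S. c s * b s f))"
  unfolding circulation_def
proof
  fix U
  have "chain_inner E (\<lambda>f. y f - (\<Sum>s\<in>S. c s * b s f)) (cut_chain U) =
      chain_inner E y (cut_chain U) - (\<Sum>s\<in>S. c s * chain_inner E (b s) (cut_chain U))"
    unfolding chain_inner_def
    by (simp add: left_diff_distrib sum_subtractf sum_distrib_left sum_distrib_right mult.assoc
        sum.swap[of _ E])
  then show "chain_inner E (\<lambda>f. y f - (\<Sum>s\<in>S. c s * b s f)) (cut_chain U) = 0"
    using y b by (simp add: circulation_def)
qed

lemma cut_chain_reachable_eq_0: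
  assumes "f \<in> F" "U = {w. \<exists>p. walk src tgt F u p w}"
  shows "cut_chain U f = 0"
proof -
  have "src f \<in> U \<longleftrightarrow> tgt f \<in> U"
    using assms walk_snoc[of src tgt F u _ f] by blast
  then show ?thesis by (simp add: cut_chain_def)
qed

lemma walk_crosses_cut:
  "walk src tgt F u p v \<Longrightarrow> u \<in> U \<Longrightarrow> v \<notin> U \<Longrightarrow> \<exists>x\<in>set p. cut_chain U (fst x) \<noteq> 0"
proof (induction p arbitrary: u)
  case (Cons x p)
  then have x: "step_src src tgt x = u" "walk src tgt F (step_tgt src tgt x) p v"
    by (auto simp: walk_Cons_iff)
  show ?case
  proof (cases "step_tgt src tgt x \<in> U")
    case True
    then show ?thesis using Cons.IH[OF x(2) True Cons.prems(3)] by auto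
  next
    case False
    then show ?thesis using x(1) Cons.prems(2)
      by (auto simp: cut_chain_def step_src_def step_tgt_def split: if_splits)
  qed
qed simp

text \<open>For an edge f of the forest, the vertices reachable from src f without using f form a
  cut crossed by f alone.\<close>

lemma circulation_on_forest_eq_0:
  assumes E: "finite E" and T: "T \<subseteq> E" "acyclic_edges src tgt T"
    and y: "circulation E y" and out: "\<And>f. f \<in> E \<Longrightarrow> f \<notin> T \<Longrightarrow> y f = 0"
    and f: "f \<in> T"
  shows "y f = 0"
proof -
  define U where "U = {w. \<exists>p. walk src tgt (T - {f}) (src f) p w}"
  have "src f \<in> U" unfolding U_def by (auto intro: exI[of _ "[]"])
  moreover have "tgt f \<notin> U" using acyclic_edgesD(1)[OF T(2) f] unfolding U_def by blast
  ultimately have cut_f: "cut_chain U f = 1" by (simp add: cut_chain_def)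
  have "y f' * cut_chain U f' = 0" if "f' \<in> E - {f}" for f'
    using that out cut_chain_reachable_eq_0[OF _ U_def, of f'] by (cases "f' \<in> T") auto
  then have "(\<Sum>f'\<in>E - {f}. y f' * cut_chain U f') = 0" by (rule sum.neutral[OF ballI])
  then have "chain_inner E y (cut_chain U) = y f * cut_chain U f"
    using E f T(1) by (auto simp: chain_inner_def sum.remove[of E f])
  then show ?thesis using y cut_f by (simp add: circulation_def)
qed

lemma sum_mult_of_bool_image:
  fixes g :: "'b \<Rightarrow> 'c::semiring_1"
  assumes I: "finite I" and l: "inj_on l I"
  shows "(\<Sum>i\<in>I. g (l i) * of_bool (f = l i)) = of_bool (f \<in> l ` I) * g f"
proof -
  have "(\<Sum>i\<in>I. g (l i) * of_bool (f = l i)) = (\<Sum>i\<in>I \<inter> {i. f = l i}. g (l i))"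
    by (rule sum_mult_of_bool_eq[OF I])
  also have "\<dots> = of_bool (f \<in> l ` I) * g f"
  proof (cases "f \<in> l ` I")
    case True
    then obtain j where j: "j \<in> I" "f = l j" by blast
    then have "I \<inter> {i. f = l i} = {j}" using l by (auto dest: inj_onD)
    then show ?thesis using j by simp
  next
    case False
    then have "I \<inter> {i. f = l i} = {}" by blast
    then show ?thesis using False by simp
  qed
  finally show ?thesis .
qed

text \<open>The difference of both sides is a circulation vanishing off the forest T.\<close>

lemma circulation_expansion:
  assumes E: "finite E" and T: "T \<subseteq> E" "acyclic_edges src tgt T"
    and I: "finite I" "inj_on l I" "l ` I \<subseteq> E - T"
    and b: "\<And>i. i \<in> I \<Longrightarrow> circulation E (b i)"
    and b_out: "\<And>i f. i \<in> I \<Longrightarrow> f \<in> E - T \<Longrightarrow> b i f = of_bool (f = l i)"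
    and y: "circulation E y" and y_out: "\<And>f. f \<in> E - T - l ` I \<Longrightarrow> y f = 0"
    and f: "f \<in> E"
  shows "y f = (\<Sum>i\<in>I. y (l i) * b i f)"
proof -
  define r where "r f = y f - (\<Sum>i\<in>I. y (l i) * b i f)" for f
  have r: "circulation E r"
    unfolding r_def by (rule circulation_diff_sum[OF y b])
  have r_out: "r f' = 0" if "f' \<in> E" "f' \<notin> T" for f'
  proof -
    have "(\<Sum>i\<in>I. y (l i) * b i f') = (\<Sum>i\<in>I. y (l i) * of_bool (f' = l i))"
      using that b_out by simp
    also have "\<dots> = of_bool (f' \<in> l ` I) * y f'"
      by (rule sum_mult_of_bool_image[OF I(1,2)])
    finally show ?thesis using that y_out unfolding r_def by auto
  qed
  have "r f = 0"
    using circulation_on_forest_eq_0[OF E T r r_out] r_out f by blast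
  then show ?thesis by (simp add: r_def)
qed

lemma spanning_tree_walk:
  assumes "graph V E src tgt" "spanning_tree src tgt V F T" "e \<in> E"
  obtains p where "walk src tgt T (tgt e) p (src e)"
  using assms unfolding graph_def spanning_tree_def connected_on_def by blast

lemma Z_chain_eq_cycle_chain:
  assumes G: "graph V E src tgt" and T0: "spanning_tree src tgt V E T0" and e: "e \<in> E"
  obtains p where "walk src tgt T0 (tgt e) p (src e)" "Z_chain src tgt T0 e = cycle_chain e p"
proof (cases "src e = tgt e")
  case True
  then show ?thesis
    using that[of "[]"] by (simp add: Z_chain_def D_chain_def cycle_chain_def fun_eq_iff)
next
  case False
  obtain p where "walk src tgt T0 (tgt e) p (src e)" using spanning_tree_walk[OF G T0 e] .
  then obtain q where q: "simple_path src tgt T0 (tgt e) q (src e)"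
    by (blast dest: walk_imp_simple_path)
  have "acyclic_edges src tgt T0" using T0 by (simp add: spanning_tree_def)
  then have "(THE p. simple_path src tgt T0 (tgt e) p (src e)) = q"
    using q by (auto intro: the_equality dest: simple_path_unique)
  then have "Z_chain src tgt T0 e = cycle_chain e q"
    using False by (simp add: Z_chain_def D_chain_def cycle_chain_def fun_eq_iff)
  with q show ?thesis by (intro that[of q]) (simp_all add: simple_path_def)
qed

end

section \<open>Minors of the fundamental cycle matrix\<close>

locale mesh_minor =
  fixes V :: "'v set" and E :: "'e set" and src tgt :: "'e \<Rightarrow> 'v" and T0 :: "'e set"
    and edge :: "'i \<Rightarrow> 'e" and K :: "'i set"
  assumes graph: "graph V E src tgt"
    and tree: "spanning_tree src tgt V E T0"
    and edge_inj: "inj_on edge K" and edge_K: "edge ` K \<subseteq> E - T0"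
begin

definition H :: "'e set" where
  "H = T0 \<union> edge ` K"

definition Z :: "'i \<Rightarrow> 'e \<Rightarrow> real" where
  "Z k = Z_chain src tgt T0 (edge k)"

definition cycle_minor :: "('i \<Rightarrow> 'e) \<Rightarrow> real" where
  "cycle_minor g = det_on (\<lambda>i k. Z k (g i)) K"

lemma finite_E: "finite E"
  using graph by (simp add: graph_def)

lemma finite_K: "finite K"
  using finite_subset[OF edge_K] finite_E edge_inj finite_imageD by blast

lemma T0_subset_E: "T0 \<subseteq> E" and acyclic_T0: "acyclic_edges src tgt T0"
  using tree by (simp_all add: spanning_tree_def)

lemma H_subset_E: "H \<subseteq> E"
  using T0_subset_E edge_K by (auto simp: H_def)

lemma Z_cycle_chain:
  assumes "k \<in> K"
  obtains p where "walk src tgt T0 (tgt (edge k)) p (src (edge k))" "Z k = cycle_chain (edge k) p"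
proof -
  have "edge k \<in> E" using assms edge_K by blast
  then obtain p where "walk src tgt T0 (tgt (edge k)) p (src (edge k))"
    "Z_chain src tgt T0 (edge k) = cycle_chain (edge k) p"
    by (rule Z_chain_eq_cycle_chain[OF graph tree])
  then show thesis using that by (simp add: Z_def)
qed

lemma Z_circulation:
  assumes "k \<in> K" shows "circulation src tgt E (Z k)"
proof -
  obtain p where "walk src tgt T0 (tgt (edge k)) p (src (edge k))" "Z k = cycle_chain (edge k) p"
    by (rule Z_cycle_chain[OF assms])
  moreover have "edge k \<in> E" using assms edge_K by blast
  ultimately show ?thesis using circulation_cycle_chain[OF finite_E T0_subset_E] by simp
qed

lemma Z_outside_T0:
  assumes "k \<in> K" "f \<notin> T0" shows "Z k f = of_bool (f = edge k)"
proof -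
  obtain p where p: "walk src tgt T0 (tgt (edge k)) p (src (edge k))" "Z k = cycle_chain (edge k) p"
    by (rule Z_cycle_chain[OF assms(1)])
  show ?thesis using cycle_chain_outside[OF p(1) assms(2)] p(2) by simp
qed

lemma Z_outside_H: "k \<in> K \<Longrightarrow> f \<notin> H \<Longrightarrow> Z k f = 0"
  by (auto simp: Z_outside_T0 H_def)

lemma Z_Ints:
  assumes "k \<in> K" shows "Z k f \<in> \<int>"
proof -
  obtain p where "Z k = cycle_chain (edge k) p"
    by (rule Z_cycle_chain[OF assms])
  then show ?thesis by (simp add: cycle_chain_Ints)
qed

lemma circulation_on_H_expansion:
  assumes "circulation src tgt E y" "\<And>f. f \<in> E - H \<Longrightarrow> y f = 0" "f \<in> E"
  shows "y f = (\<Sum>k\<in>K. y (edge k) * Z k f)"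
  using assms edge_K
  by (intro circulation_expansion[OF finite_E T0_subset_E acyclic_T0 finite_K edge_inj])
     (auto simp: Z_circulation Z_outside_T0 H_def)

text \<open>Y s is the fundamental cycle of s with respect to the tree T.\<close>

lemma cycle_matrix_integral_inverse:
  assumes T: "spanning_tree src tgt V H T"
  obtains Y where "\<And>s f. Y s f \<in> \<int>"
    and "\<And>k k'. k \<in> K \<Longrightarrow> k' \<in> K \<Longrightarrow> (\<Sum>s\<in>H - T. Z k s * Y s (edge k')) = of_bool (k = k')"
    and "\<And>s s'. s \<in> H - T \<Longrightarrow> s' \<in> H - T \<Longrightarrow> (\<Sum>k\<in>K. Y s (edge k) * Z k s') = of_bool (s = s')"
proof -
  let ?S = "H - T"
  have TH: "T \<subseteq> H" and acyclic_T: "acyclic_edges src tgt T"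
    using T by (simp_all add: spanning_tree_def)
  have TE: "T \<subseteq> E" using TH H_subset_E by blast
  have SE: "?S \<subseteq> E" using H_subset_E by blast
  have "\<forall>s\<in>?S. \<exists>p. walk src tgt T (tgt s) p (src s)"
    using spanning_tree_walk[OF graph T] SE by blast
  then obtain w where w: "\<And>s. s \<in> ?S \<Longrightarrow> walk src tgt T (tgt s) (w s) (src s)"
    by metis
  define Y where "Y s = cycle_chain s (w s)" for s
  have Y_circulation: "circulation src tgt E (Y s)" if "s \<in> ?S" for s
    unfolding Y_def using that SE by (intro circulation_cycle_chain[OF finite_E TE _ w]) auto
  have Y_outside: "Y s f = of_bool (f = s)" if "s \<in> ?S" "f \<notin> T" for s f
    unfolding Y_def using cycle_chain_outside[OF w] that by blast
  show thesis
  proof (rule that)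
    show "Y s f \<in> \<int>" for s f by (simp add: Y_def cycle_chain_Ints)
  next
    fix k k' assume k: "k \<in> K" and k': "k' \<in> K"
    have "Z k (edge k') = (\<Sum>s\<in>?S. Z k s * Y s (edge k'))"
      using k k' edge_K SE Z_outside_H finite_subset[OF SE finite_E]
      by (intro circulation_expansion[OF finite_E TE acyclic_T, where l = "\<lambda>s. s"])
         (auto simp: Z_circulation Y_circulation Y_outside H_def)
    moreover have "edge k' \<notin> T0" using k' edge_K by blast
    then have "Z k (edge k') = of_bool (edge k' = edge k)" by (rule Z_outside_T0[OF k])
    moreover have "edge k' = edge k \<longleftrightarrow> k = k'" using k k' edge_inj by (auto dest: inj_onD)
    ultimately show "(\<Sum>s\<in>?S. Z k s * Y s (edge k')) = of_bool (k = k')" by simp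
  next
    fix s s' assume s: "s \<in> ?S" and s': "s' \<in> ?S"
    have "Y s f = 0" if "f \<in> E - H" for f
    proof -
      have "f \<notin> T" "f \<noteq> s" using that s TH by auto
      then show ?thesis using Y_outside[OF s] by simp
    qed
    then have "Y s s' = (\<Sum>k\<in>K. Y s (edge k) * Z k s')"
      using s s' SE by (intro circulation_on_H_expansion Y_circulation) auto
    then show "(\<Sum>k\<in>K. Y s (edge k) * Z k s') = of_bool (s = s')"
      using s s' Y_outside by auto
  qed
qed

lemma card_tree_complement:
  assumes "spanning_tree src tgt V H T"
  shows "card (H - T) = card K"
proof -
  obtain Y where "\<And>s f. Y s f \<in> \<int>" and
    ZY: "\<And>k k'. k \<in> K \<Longrightarrow> k' \<in> K \<Longrightarrow> (\<Sum>s\<in>H - T. Z k s * Y s (edge k')) = of_bool (k = k')" and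
    YZ: "\<And>s s'. s \<in> H - T \<Longrightarrow> s' \<in> H - T \<Longrightarrow> (\<Sum>k\<in>K. Y s (edge k) * Z k s') = of_bool (s = s')"
    by (rule cycle_matrix_integral_inverse[OF assms], rule that)
  have "real (card (H - T)) = (\<Sum>s\<in>H - T. \<Sum>k\<in>K. Y s (edge k) * Z k s)"
    using YZ by simp
  also have "\<dots> = (\<Sum>k\<in>K. \<Sum>s\<in>H - T. Z k s * Y s (edge k))"
    by (subst sum.swap) (simp add: mult.commute)
  also have "\<dots> = real (card K)"
    using ZY by simp
  finally show ?thesis by simp
qed

lemma cycle_minor_tree:
  assumes T: "spanning_tree src tgt V H T" and g: "bij_betw g K (H - T)"
  shows "cycle_minor g * cycle_minor g = 1"
proof -
  obtain Y where Y_Ints: "\<And>s f. Y s f \<in> \<int>" and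
    "\<And>k k'. k \<in> K \<Longrightarrow> k' \<in> K \<Longrightarrow> (\<Sum>s\<in>H - T. Z k s * Y s (edge k')) = of_bool (k = k')" and
    YZ: "\<And>s s'. s \<in> H - T \<Longrightarrow> s' \<in> H - T \<Longrightarrow> (\<Sum>k\<in>K. Y s (edge k) * Z k s') = of_bool (s = s')"
    by (rule cycle_matrix_integral_inverse[OF T], rule that)
  define Q where "Q k i = Y (g i) (edge k)" for k i
  have gS: "g i \<in> H - T" if "i \<in> K" for i using g that by (auto simp: bij_betw_def)
  have "det_on (\<lambda>i i'. \<Sum>k\<in>K. Z k (g i) * Q k i') K = det_on (\<lambda>i i'. of_bool (i = i')) K"
  proof (rule det_on_cong)
    fix i i' assume "i \<in> K" "i' \<in> K"
    then have "(\<Sum>k\<in>K. Z k (g i) * Q k i') = of_bool (g i' = g i)"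
      using YZ[OF gS gS] by (simp add: Q_def mult.commute)
    also have "\<dots> = of_bool (i = i')"
      using g \<open>i \<in> K\<close> \<open>i' \<in> K\<close> by (auto simp: bij_betw_def dest: inj_onD)
    finally show "(\<Sum>k\<in>K. Z k (g i) * Q k i') = of_bool (i = i')" .
  qed
  moreover have "det_on (\<lambda>i i'. \<Sum>k\<in>K. Z k (g i) * Q k i') K = cycle_minor g * det_on Q K"
    unfolding cycle_minor_def by (rule det_on_mult[OF finite_K])
  ultimately have "cycle_minor g * det_on Q K = 1"
    using det_on_id[OF finite_K] by simp
  moreover have "cycle_minor g \<in> \<int>" "det_on Q K \<in> \<int>"
    unfolding cycle_minor_def Q_def using Z_Ints Y_Ints by (auto intro: det_on_Ints)
  ultimately show ?thesis using Ints_mult_eq_1_imp_square_eq_1 by blast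
qed

lemma cycle_minor_outside_H:
  assumes "i0 \<in> K" "g i0 \<notin> H"
  shows "cycle_minor g = 0"
  unfolding cycle_minor_def
proof (rule det_on_dependent_rows[OF finite_K assms(1), of "\<lambda>i. of_bool (i = i0)"])
  fix k assume "k \<in> K"
  then show "(\<Sum>i\<in>K. of_bool (i = i0) * Z k (g i)) = 0"
    using assms finite_K by (simp add: Z_outside_H)
qed simp

text \<open>The cut of a component of H - g ` K is orthogonal to every Z k, and it is crossed by an
  edge of the connected T0, hence by some g i: a nontrivial relation among the rows.\<close>

lemma cycle_minor_disconnected:
  assumes g: "g ` K \<subseteq> E" "inj_on g K" and disc: "\<not> connected_on src tgt V (H - g ` K)"
  shows "cycle_minor g = 0"
proof -
  let ?T = "H - g ` K"
  obtain u v where uv: "u \<in> V" "v \<in> V" "\<nexists>p. walk src tgt ?T u p v"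
    using disc unfolding connected_on_def by blast
  define U where "U = {w. \<exists>p. walk src tgt ?T u p w}"
  have cut_T: "cut_chain src tgt U f = 0" if "f \<in> ?T" for f
    using cut_chain_reachable_eq_0[OF that U_def] .
  obtain p where p: "walk src tgt T0 u p v"
    using tree uv unfolding spanning_tree_def connected_on_def by blast
  have "u \<in> U" "v \<notin> U" using uv unfolding U_def by (auto intro: exI[of _ "[]"])
  then obtain x where x: "x \<in> set p" "cut_chain src tgt U (fst x) \<noteq> 0"
    using walk_crosses_cut[OF p] by blast
  have "fst x \<in> T0" using walk_edges_subset[OF p] x(1) by blast
  then have "fst x \<in> g ` K" using x(2) cut_T by (auto simp: H_def)
  then obtain i0 where i0: "i0 \<in> K" "g i0 = fst x" by (metis imageE)
  show ?thesis unfolding cycle_minor_def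
  proof (rule det_on_dependent_rows[OF finite_K i0(1), of "\<lambda>i. cut_chain src tgt U (g i)"])
    show "cut_chain src tgt U (g i0) \<noteq> 0" using i0 x by simp
  next
    fix k assume k: "k \<in> K"
    have "(\<Sum>i\<in>K. cut_chain src tgt U (g i) * Z k (g i)) = (\<Sum>f\<in>g ` K. Z k f * cut_chain src tgt U f)"
      by (simp add: sum.reindex[OF g(2)] mult.commute)
    also have "\<dots> = chain_inner E (Z k) (cut_chain src tgt U)"
      unfolding chain_inner_def
      using k cut_T Z_outside_H by (intro sum.mono_neutral_left[OF finite_E g(1)]) auto
    also have "\<dots> = 0" using Z_circulation[OF k] by (simp add: circulation_def)
    finally show "(\<Sum>i\<in>K. cut_chain src tgt U (g i) * Z k (g i)) = 0" .
  qed
qed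

text \<open>A cycle in H - g ` K is a circulation supported on H, hence a combination of the Z k,
  and it vanishes on every g i: a nontrivial relation among the columns.\<close>

lemma cycle_minor_cyclic:
  assumes g: "g ` K \<subseteq> H" and cyc: "\<not> acyclic_edges src tgt (H - g ` K)"
  shows "cycle_minor g = 0"
proof -
  let ?T = "H - g ` K"
  obtain t w where t: "t \<in> ?T" and w: "walk src tgt (?T - {t}) (src t) w (tgt t)"
    using cyc unfolding acyclic_edges_def by blast
  define y where "y = cycle_chain t (rev_walk w)"
  have w': "walk src tgt (?T - {t}) (tgt t) (rev_walk w) (src t)"
    using walk_rev_walk[OF w] .
  have y_outside: "y f = of_bool (f = t)" if "f \<notin> ?T - {t}" for f
    unfolding y_def using cycle_chain_outside[OF w' that] .
  have "circulation src tgt E y"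
    unfolding y_def using t H_subset_E by (intro circulation_cycle_chain[OF finite_E _ _ w']) auto
  then have y_expansion: "y f = (\<Sum>k\<in>K. y (edge k) * Z k f)" if "f \<in> E" for f
    using y_outside t that by (intro circulation_on_H_expansion) auto
  have "\<exists>k0\<in>K. y (edge k0) \<noteq> 0"
  proof (rule ccontr)
    assume "\<not> ?thesis"
    then have "y t = 0" using y_expansion[of t] t H_subset_E by auto
    then show False using y_outside[of t] by simp
  qed
  then obtain k0 where k0: "k0 \<in> K" "y (edge k0) \<noteq> 0" by blast
  show ?thesis unfolding cycle_minor_def
  proof (rule det_on_dependent_columns[OF finite_K k0(1), of "\<lambda>k. y (edge k)"])
    show "y (edge k0) \<noteq> 0" by (rule k0(2))
  next
    fix i assume "i \<in> K"
    then have "g i \<in> E" "g i \<notin> ?T - {t}" "g i \<noteq> t" using g H_subset_E t by auto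
    then show "(\<Sum>k\<in>K. Z k (g i) * y (edge k)) = 0"
      using y_expansion[of "g i"] y_outside by (simp add: mult.commute)
  qed
qed

lemma cycle_minor_non_tree:
  assumes "g ` K \<subseteq> E" "inj_on g K" "\<not> (g ` K \<subseteq> H \<and> spanning_tree src tgt V H (H - g ` K))"
  shows "cycle_minor g = 0"
proof (cases "g ` K \<subseteq> H")
  case True
  then show ?thesis
    using assms cycle_minor_disconnected cycle_minor_cyclic by (auto simp: spanning_tree_def)
qed (use cycle_minor_outside_H in blast)

lemma sum_cycle_minors_onto:
  assumes S: "S \<subseteq> E"
  shows "(\<Sum>g | g \<in> K \<rightarrow>\<^sub>E S \<and> bij_betw g K S. (\<Prod>i\<in>K. Z i (g i)) * cycle_minor g) =
    of_bool (S \<subseteq> H \<and> spanning_tree src tgt V H (H - S))"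
proof (cases "S \<subseteq> H \<and> spanning_tree src tgt V H (H - S)")
  case True
  then have HS: "H - (H - S) = S" by blast
  then have "card S = card K" using card_tree_complement True by metis
  moreover have "finite S" using finite_subset[OF S finite_E] .
  ultimately obtain g0 where g0: "bij_betw g0 K S"
    using finite_same_card_bij[OF finite_K] by metis
  have "(\<Sum>g | g \<in> K \<rightarrow>\<^sub>E S \<and> bij_betw g K S. (\<Prod>i\<in>K. Z i (g i)) * cycle_minor g) =
      det_on (\<lambda>i k. Z i (g0 k)) K * cycle_minor g0"
    unfolding cycle_minor_def by (rule det_on_sum_bijections[OF finite_K g0])
  also have "\<dots> = cycle_minor g0 * cycle_minor g0"
    using det_on_transpose[OF finite_K, of "\<lambda>i k. Z k (g0 i)"] by (simp add: cycle_minor_def)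
  also have "\<dots> = 1"
    using cycle_minor_tree[of "H - S" g0] True HS g0 by simp
  finally show ?thesis using True by simp
next
  case False
  have "cycle_minor g = 0" if "g \<in> K \<rightarrow>\<^sub>E S" "bij_betw g K S" for g
    using that S False by (intro cycle_minor_non_tree) (auto simp: bij_betw_def)
  then show ?thesis using False by simp
qed

lemma det_on_Gram_eq_num_spanning_trees:
  "det_on (\<lambda>i k. chain_inner E (Z i) (Z k)) K = real (num_spanning_trees src tgt V H)"
proof -
  let ?G = "{g. g \<in> K \<rightarrow>\<^sub>E E \<and> inj_on g K}"
  let ?c = "\<lambda>g. (\<Prod>i\<in>K. Z i (g i)) * cycle_minor g"
  have "finite ?G" using finite_PiE[OF finite_K, of "\<lambda>_. E"] finite_E by (auto intro: finite_subset)
  have fibre: "{g. g \<in> K \<rightarrow>\<^sub>E E \<and> inj_on g K \<and> g ` K = S} = {g. g \<in> K \<rightarrow>\<^sub>E S \<and> bij_betw g K S}"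
    if "S \<subseteq> E" for S
    using that by (auto simp: bij_betw_def)
  have "det_on (\<lambda>i k. chain_inner E (Z i) (Z k)) K = sum ?c ?G"
    unfolding chain_inner_def cycle_minor_def by (rule det_on_Cauchy_Binet[OF finite_K finite_E])
  also have "\<dots> = (\<Sum>S\<in>Pow E. sum ?c {g \<in> ?G. g ` K = S})"
    using finite_E by (intro sum.group[symmetric] \<open>finite ?G\<close>) auto
  also have "\<dots> = (\<Sum>S\<in>Pow E. of_bool (S \<subseteq> H \<and> spanning_tree src tgt V H (H - S)))"
    by (intro sum.cong refl) (simp add: fibre sum_cycle_minors_onto)
  also have "\<dots> = real (card {S. S \<subseteq> H \<and> spanning_tree src tgt V H (H - S)})"
  proof -
    have "{S. S \<subseteq> E \<and> S \<subseteq> H \<and> spanning_tree src tgt V H (H - S)} =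
        {S. S \<subseteq> H \<and> spanning_tree src tgt V H (H - S)}"
      using H_subset_E by blast
    then show ?thesis using finite_E by (simp add: Int_def)
  qed
  also have "card {S. S \<subseteq> H \<and> spanning_tree src tgt V H (H - S)} = num_spanning_trees src tgt V H"
    unfolding num_spanning_trees_def
  proof (rule bij_betw_same_card[where f = "\<lambda>S. H - S"], rule bij_betw_byWitness[where f' = "\<lambda>T. H - T"])
  qed (auto simp: spanning_tree_def Diff_Diff_Int Int_absorb1)
  finally show ?thesis .
qed

end

lemma principal_minor_mesh_matrix:
  assumes "graph V E src tgt" "spanning_tree src tgt V E T0" "distinct es" "set es = E - T0"
    and K: "K \<subseteq> {..<length es}"
  shows "det_on (\<lambda>i k. mesh_matrix src tgt E T0 es $$ (i, k)) K =
    real (num_spanning_trees src tgt V (T0 \<union> (\<lambda>k. es ! k) ` K))"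
proof -
  have "inj_on (\<lambda>k. es ! k) K" "(\<lambda>k. es ! k) ` K \<subseteq> E - T0"
    using K assms(3,4) nth_mem[of _ es] by (auto intro: inj_on_nth)
  with assms(1,2) interpret mesh_minor V E src tgt T0 "\<lambda>k. es ! k" K
    by unfold_locales
  have "det_on (\<lambda>i k. mesh_matrix src tgt E T0 es $$ (i, k)) K = det_on (\<lambda>i k. chain_inner E (Z i) (Z k)) K"
    using K by (intro det_on_cong) (auto simp: mesh_matrix_def Z_def subset_eq)
  then show ?thesis using det_on_Gram_eq_num_spanning_trees by (simp add: H_def)
qed

theorem lemma3p1:
  fixes V :: "'v set" and E :: "'e set" and src tgt :: "'e \<Rightarrow> 'v"
    and T0 :: "'e set" and es :: "'e list"
  assumes "graph V E src tgt"
    and "connected_on src tgt V E"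
    and "spanning_tree src tgt V E T0"
    and "distinct es" and "set es = E - T0"
  shows "char_poly (mesh_matrix src tgt E T0 es) =
    monom 1 (length es) +
    (\<Sum>j = 1..length es. Polynomial.smult ((-1) ^ j *
        real (\<Sum>K\<in>{K. K \<subseteq> {..<length es} \<and> card K = j}.
                num_spanning_trees src tgt V (T0 \<union> (\<lambda>k. es ! k) ` K)))
      (monom 1 (length es - j)))"
proof -
  \<comment> \<open>The connectivity of G is implied by the spanning tree T0 and not needed.\<close>
  let ?N = "length es" and ?M = "mesh_matrix src tgt E T0 es"
  have minors: "(\<Sum>K | K \<subseteq> {..<?N} \<and> card K = j. det_on (\<lambda>i k. ?M $$ (i, k)) K) =
      real (\<Sum>K | K \<subseteq> {..<?N} \<and> card K = j. num_spanning_trees src tgt V (T0 \<union> (\<lambda>k. es ! k) ` K))"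
    for j unfolding of_nat_sum
    using principal_minor_mesh_matrix[OF assms(1,3,4,5)] by (intro sum.cong refl) simp
  have no_minors: "{K. K \<subseteq> {..<?N} \<and> card K = 0} = {{}}"
    using finite_subset[of _ "{..<?N}"] by auto
  have "?M \<in> carrier_mat ?N ?N" by (simp add: mesh_matrix_def)
  then show ?thesis
    by (simp add: char_poly_eq_sum_principal_minors sum.atLeast_Suc_atMost no_minors)
       (simp add: minors smult_monom)
qed

end
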